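(* For each $x\in\Omega$, the set $\bigcup_{n\ge0}T^{-n}(x)$ is dense in $\Omega$.
   Context: Let $I=[0,1)$ with its usual metric $d_I$, fix $\theta\in(0,1)$, and let $\Omega=I^{\mathbb Z}$ with metric $d(x,y)=\sup_{k\in\mathbb Z}\theta^{|k|}d_I(x_k,y_k)$. Let $\tau:I\to I$ have full branches, so that $b=\#\tau^{-1}(t)$ is constant. Assume there is $\eta\in(0,1)$ such that every inverse branch $\zeta$ of $\tau$ satisfies $d_I(\zeta(s),\zeta(t))\le\eta\,d_I(s,t)$. Let $(\bar\tau x)_i=\tau(x_i)$ and let $\sigma$ be the shift $(\sigma x)_i=x_{i+1}$. Let $E:\Omega\to\Omega$ be invertible and suppose there is $C_E\in(0,\eta^{-1})$ with $d(\sigma^nE^{-1}x,\sigma^nE^{-1}y)\le C_E\,d(\sigma^nx,\sigma^ny)$ for all $n\in\mathbb Z$ and $x,y\in\Omega$. The coupled map is $T=E\circ\bar\tau$. *)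

theory Defs
  imports Complex_Main
begin

definition unitI :: "real set" where
  "unitI = {0..<1}"

definition Omega :: "(int \<Rightarrow> real) set" where
  "Omega = {x. \<forall>k. x k \<in> unitI}"

definition dOm :: "real \<Rightarrow> (int \<Rightarrow> real) \<Rightarrow> (int \<Rightarrow> real) \<Rightarrow> real" where
  "dOm \<theta> x y = (SUP k. \<theta> ^ nat \<bar>k\<bar> * \<bar>x k - y k\<bar>)"

definition shiftn :: "int \<Rightarrow> (int \<Rightarrow> real) \<Rightarrow> (int \<Rightarrow> real)" where
  "shiftn n x = (\<lambda>i. x (i + n))"

definition taubar :: "(real \<Rightarrow> real) \<Rightarrow> (int \<Rightarrow> real) \<Rightarrow> (int \<Rightarrow> real)" where
  "taubar \<tau> x = (\<lambda>i. \<tau> (x i))"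

end

theory Submission
  imports Defs
begin

(* The argument is a pullback along contracting local inverses.  For every y \<in> Omega the
   map T has a local inverse L at y: L takes values in Omega, T (L u) = u, L (T y) = y,
   and L contracts the metric by c = \<eta> * C_E < 1.  It is built by undoing E with its
   inverse (which expands distances by at most C_E) and then undoing taubar \<tau> by choosing
   in every coordinate the branch of \<tau>\<inverse> that passes through y (which contracts by \<eta>).
   Pulling x back n times along the local inverses at y, T y, ..., T^(n-1) y gives a
   point z with T^n z = x and d(z,y) \<le> c^n d(x, T^n y) \<le> c^n, because Omega has
   diameter at most 1. *)

lemma dOm_term_le_1:
  assumes "u \<in> Omega" "v \<in> Omega" "0 < \<theta>" "\<theta> < 1"
  shows "\<theta> ^ nat \<bar>k\<bar> * \<bar>u k - v k\<bar> \<le> 1"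
proof -
  have "u k \<in> unitI" "v k \<in> unitI" using assms(1,2) by (auto simp: Omega_def)
  then have "\<bar>u k - v k\<bar> \<le> 1" by (auto simp: unitI_def)
  moreover have "\<theta> ^ nat \<bar>k\<bar> \<le> 1" using assms(3,4) by (simp add: power_le_one)
  ultimately show ?thesis using assms(3) by (simp add: mult_le_one)
qed

lemma dOm_le_1:
  assumes "u \<in> Omega" "v \<in> Omega" "0 < \<theta>" "\<theta> < 1"
  shows "dOm \<theta> u v \<le> 1"
  unfolding dOm_def using dOm_term_le_1[OF assms] by (intro cSUP_least) auto

text \<open>A coordinatewise \<open>\<eta>\<close>-Lipschitz relation between two pairs of sequences passes to dOm;
  only the second pair needs to lie in Omega (to make its supremum finite).\<close>
lemma dOm_coordinatewise_Lipschitz: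
  assumes "u \<in> Omega" "v \<in> Omega" "0 < \<theta>" "\<theta> < 1" "0 \<le> \<eta>"
    and coord: "\<And>k. \<bar>f k - g k\<bar> \<le> \<eta> * \<bar>u k - v k\<bar>"
  shows "dOm \<theta> f g \<le> \<eta> * dOm \<theta> u v"
  unfolding dOm_def
proof (rule cSUP_least)
  fix k
  have bdd: "bdd_above (range (\<lambda>k. \<theta> ^ nat \<bar>k\<bar> * \<bar>u k - v k\<bar>))"
    using dOm_term_le_1[OF assms(1-4)] by (intro bdd_aboveI[where M = 1]) auto
  have "\<theta> ^ nat \<bar>k\<bar> * \<bar>f k - g k\<bar> \<le> \<eta> * (\<theta> ^ nat \<bar>k\<bar> * \<bar>u k - v k\<bar>)"
    using mult_left_mono[OF coord[of k], of "\<theta> ^ nat \<bar>k\<bar>"] assms(3) by (simp add: ac_simps)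
  also have "\<dots> \<le> \<eta> * (SUP k. \<theta> ^ nat \<bar>k\<bar> * \<bar>u k - v k\<bar>)"
    using assms(5) bdd by (intro mult_left_mono cSUP_upper) auto
  finally show "\<theta> ^ nat \<bar>k\<bar> * \<bar>f k - g k\<bar> \<le> \<eta> * (SUP k. \<theta> ^ nat \<bar>k\<bar> * \<bar>u k - v k\<bar>)" .
qed simp

definition contracting_local_inverse ::
    "'a set \<Rightarrow> ('a \<Rightarrow> 'a \<Rightarrow> real) \<Rightarrow> real \<Rightarrow> ('a \<Rightarrow> 'a) \<Rightarrow> 'a \<Rightarrow> ('a \<Rightarrow> 'a) \<Rightarrow> bool" where
  "contracting_local_inverse S d c T y L \<longleftrightarrow>
     (\<forall>u\<in>S. L u \<in> S \<and> T (L u) = u) \<and> L (T y) = y \<and>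
     (\<forall>u\<in>S. \<forall>v\<in>S. d (L u) (L v) \<le> c * d u v)"

lemma preimage_near_point:
  fixes T :: "'a \<Rightarrow> 'a" and d :: "'a \<Rightarrow> 'a \<Rightarrow> real"
  assumes T_into: "\<And>u. u \<in> S \<Longrightarrow> T u \<in> S"
    and local_inv: "\<And>y. y \<in> S \<Longrightarrow> \<exists>L. contracting_local_inverse S d c T y L"
    and "0 \<le> c" and "x \<in> S" and "y \<in> S"
  shows "\<exists>z\<in>S. (T ^^ n) z = x \<and> d z y \<le> c ^ n * d x ((T ^^ n) y)"
  using \<open>y \<in> S\<close>
proof (induction n arbitrary: y)
  case 0
  then show ?case using \<open>x \<in> S\<close> by auto
next
  case (Suc n)
  obtain z' where z': "z' \<in> S" "(T ^^ n) z' = x" "d z' (T y) \<le> c ^ n * d x ((T ^^ n) (T y))"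
    using Suc.IH T_into Suc.prems by blast
  obtain L where L: "contracting_local_inverse S d c T y L"
    using local_inv Suc.prems by blast
  have Ty: "T y \<in> S" using T_into Suc.prems .
  have "d (L z') y = d (L z') (L (T y))"
    using L by (simp add: contracting_local_inverse_def)
  also have "\<dots> \<le> c * d z' (T y)"
    using L z'(1) Ty unfolding contracting_local_inverse_def by blast
  also have "\<dots> \<le> c * (c ^ n * d x ((T ^^ n) (T y)))"
    using z'(3) \<open>0 \<le> c\<close> by (rule mult_left_mono)
  also have "\<dots> = c ^ Suc n * d x ((T ^^ Suc n) y)"
    by (simp only: funpow_Suc_right comp_def power_Suc mult.assoc)
  finally have "d (L z') y \<le> c ^ Suc n * d x ((T ^^ Suc n) y)" .
  moreover have "L z' \<in> S" "T (L z') = z'"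
    using L z'(1) by (simp_all add: contracting_local_inverse_def)
  moreover from this(2) have "(T ^^ Suc n) (L z') = x"
    using z'(2) by (simp only: funpow_Suc_right comp_def)
  ultimately show ?case by blast
qed

lemma backward_orbit_dense:
  fixes T :: "'a \<Rightarrow> 'a" and d :: "'a \<Rightarrow> 'a \<Rightarrow> real"
  assumes T_into: "\<And>u. u \<in> S \<Longrightarrow> T u \<in> S"
    and local_inv: "\<And>y. y \<in> S \<Longrightarrow> \<exists>L. contracting_local_inverse S d c T y L"
    and "0 \<le> c" "c < 1"
    and diam: "\<And>u v. u \<in> S \<Longrightarrow> v \<in> S \<Longrightarrow> d u v \<le> D" and "0 < D"
    and "x \<in> S" "y \<in> S" "0 < \<epsilon>"
  shows "\<exists>z\<in>(\<Union>n. {w\<in>S. (T ^^ n) w = x}). d z y < \<epsilon>"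
proof -
  obtain n where n: "c ^ n < \<epsilon> / D"
    using real_arch_pow_inv[of "\<epsilon> / D" c] \<open>0 < \<epsilon>\<close> \<open>0 < D\<close> \<open>c < 1\<close> by auto
  obtain z where z: "z \<in> S" "(T ^^ n) z = x" "d z y \<le> c ^ n * d x ((T ^^ n) y)"
    using preimage_near_point[OF T_into local_inv \<open>0 \<le> c\<close> \<open>x \<in> S\<close> \<open>y \<in> S\<close>] by blast
  have "(T ^^ n) y \<in> S" using \<open>y \<in> S\<close> T_into by (induction n) auto
  then have "c ^ n * d x ((T ^^ n) y) \<le> c ^ n * D"
    using diam \<open>x \<in> S\<close> \<open>0 \<le> c\<close> by (simp add: mult_left_mono)
  also have "\<dots> < \<epsilon>" using n \<open>0 < D\<close> by (simp add: pos_less_divide_eq)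
  finally have "d z y < \<epsilon>" using z(3) by linarith
  moreover have "z \<in> (\<Union>n. {w\<in>S. (T ^^ n) w = x})" using z(1,2) by blast
  ultimately show ?thesis by blast
qed

text \<open>Undoing taubar \<tau> near w: choose in every coordinate the inverse branch of \<tau> through
  w i.\<close>
lemma taubar_local_inverse:
  assumes "0 < \<theta>" "\<theta> < 1" "0 \<le> \<eta>"
    and tau_into: "\<forall>s\<in>unitI. \<tau> s \<in> unitI"
    and branch: "\<forall>j<b. \<forall>t\<in>unitI. \<zeta> j t \<in> unitI \<and> \<tau> (\<zeta> j t) = t"
    and branches_cover: "\<forall>t\<in>unitI. {s\<in>unitI. \<tau> s = t} \<subseteq> (\<lambda>j. \<zeta> j t) ` {..<b}"
    and branch_Lipschitz: "\<forall>j<b. \<forall>s\<in>unitI. \<forall>t\<in>unitI. \<bar>\<zeta> j s - \<zeta> j t\<bar> \<le> \<eta> * \<bar>s - t\<bar>"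
    and "w \<in> Omega"
  shows "\<exists>G. (\<forall>u\<in>Omega. G u \<in> Omega \<and> taubar \<tau> (G u) = u) \<and> G (taubar \<tau> w) = w \<and>
             (\<forall>u\<in>Omega. \<forall>v\<in>Omega. dOm \<theta> (G u) (G v) \<le> \<eta> * dOm \<theta> u v)"
proof -
  have "\<exists>j<b. \<zeta> j (\<tau> (w i)) = w i" for i
  proof -
    have "w i \<in> unitI" using \<open>w \<in> Omega\<close> by (auto simp: Omega_def)
    then show ?thesis using tau_into branches_cover by fastforce
  qed
  then obtain br where br: "\<And>i. br i < b" "\<And>i. \<zeta> (br i) (\<tau> (w i)) = w i" by metis
  define G where "G u = (\<lambda>i. \<zeta> (br i) (u i))" for u :: "int \<Rightarrow> real"
  have "G u \<in> Omega \<and> taubar \<tau> (G u) = u" if "u \<in> Omega" for u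
    using that br(1) branch by (auto simp: G_def Omega_def taubar_def)
  moreover have "G (taubar \<tau> w) = w"
    using br(2) by (simp add: G_def taubar_def)
  moreover have "dOm \<theta> (G u) (G v) \<le> \<eta> * dOm \<theta> u v" if "u \<in> Omega" "v \<in> Omega" for u v
    using that br(1) branch_Lipschitz
    by (intro dOm_coordinatewise_Lipschitz[OF that assms(1-3)]) (auto simp: G_def Omega_def)
  ultimately show ?thesis by blast
qed

text \<open>The Lipschitz bound on the inverse of E is the shift-0 case
  of the hypothesis on E in the main theorem.\<close>
lemma coupled_map_local_inverse:
  assumes tau_local_inv: "\<exists>G. (\<forall>u\<in>Omega. G u \<in> Omega \<and> taubar \<tau> (G u) = u) \<and>
             G (taubar \<tau> y) = y \<and> (\<forall>u\<in>Omega. \<forall>v\<in>Omega. dOm \<theta> (G u) (G v) \<le> \<eta> * dOm \<theta> u v)"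
    and "0 \<le> \<eta>" and "bij_betw E Omega Omega"
    and E_inv_Lipschitz: "\<forall>u\<in>Omega. \<forall>v\<in>Omega.
           dOm \<theta> (inv_into Omega E u) (inv_into Omega E v) \<le> C\<^sub>E * dOm \<theta> u v"
    and "taubar \<tau> y \<in> Omega"
  shows "\<exists>L. contracting_local_inverse Omega (dOm \<theta>) (\<eta> * C\<^sub>E) (E \<circ> taubar \<tau>) y L"
proof -
  obtain G where G: "\<forall>u\<in>Omega. G u \<in> Omega \<and> taubar \<tau> (G u) = u" "G (taubar \<tau> y) = y"
    "\<forall>u\<in>Omega. \<forall>v\<in>Omega. dOm \<theta> (G u) (G v) \<le> \<eta> * dOm \<theta> u v"
    using tau_local_inv by blast
  define Ei where "Ei = inv_into Omega E"
  have Ei: "Ei u \<in> Omega" "E (Ei u) = u" if "u \<in> Omega" for u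
    using \<open>bij_betw E Omega Omega\<close> that
    by (auto simp: Ei_def bij_betw_def inv_into_into f_inv_into_f)
  have "Ei (E (taubar \<tau> y)) = taubar \<tau> y"
    using \<open>bij_betw E Omega Omega\<close> \<open>taubar \<tau> y \<in> Omega\<close>
    by (simp add: Ei_def bij_betw_def inv_into_f_f)
  moreover have "dOm \<theta> (G (Ei u)) (G (Ei v)) \<le> \<eta> * C\<^sub>E * dOm \<theta> u v"
    if "u \<in> Omega" "v \<in> Omega" for u v
  proof -
    have "dOm \<theta> (G (Ei u)) (G (Ei v)) \<le> \<eta> * dOm \<theta> (Ei u) (Ei v)"
      using G(3) Ei that by blast
    also have "\<dots> \<le> \<eta> * (C\<^sub>E * dOm \<theta> u v)"
      using E_inv_Lipschitz that \<open>0 \<le> \<eta>\<close> by (simp add: Ei_def mult_left_mono)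
    finally show ?thesis by (simp add: mult.assoc)
  qed
  ultimately have "contracting_local_inverse Omega (dOm \<theta>) (\<eta> * C\<^sub>E) (E \<circ> taubar \<tau>) y (G \<circ> Ei)"
    using G(1,2) Ei by (simp add: contracting_local_inverse_def)
  then show ?thesis by blast
qed

theorem mainTheorem11:
  fixes \<theta> \<eta> C\<^sub>E :: real and \<tau> :: "real \<Rightarrow> real"
    and b :: nat and \<zeta> :: "nat \<Rightarrow> real \<Rightarrow> real"
    and E :: "(int \<Rightarrow> real) \<Rightarrow> (int \<Rightarrow> real)" and x :: "int \<Rightarrow> real"
  assumes "0 < \<theta>" and "\<theta> < 1" and "0 < \<eta>" and "\<eta> < 1"
    and "\<forall>s\<in>unitI. \<tau> s \<in> unitI"
    and "\<forall>j<b. \<forall>t\<in>unitI. \<zeta> j t \<in> unitI \<and> \<tau> (\<zeta> j t) = t"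
    and "\<forall>t\<in>unitI. {s\<in>unitI. \<tau> s = t} = (\<lambda>j. \<zeta> j t) ` {..<b}
                  \<and> card {s\<in>unitI. \<tau> s = t} = b"
    and "\<forall>j<b. \<forall>s\<in>unitI. \<forall>t\<in>unitI. \<bar>\<zeta> j s - \<zeta> j t\<bar> \<le> \<eta> * \<bar>s - t\<bar>"
    and "bij_betw E Omega Omega"
    and "0 < C\<^sub>E" and "C\<^sub>E < 1 / \<eta>"
    and "\<forall>n::int. \<forall>y\<in>Omega. \<forall>z\<in>Omega.
           dOm \<theta> (shiftn n (inv_into Omega E y)) (shiftn n (inv_into Omega E z))
             \<le> C\<^sub>E * dOm \<theta> (shiftn n y) (shiftn n z)"
    and "x \<in> Omega"
  shows "\<forall>y\<in>Omega. \<forall>\<epsilon>>0. \<exists>z\<in>(\<Union>n. {w\<in>Omega. ((E \<circ> taubar \<tau>) ^^ n) w = x}).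
           dOm \<theta> z y < \<epsilon>"
proof (intro ballI allI impI)
  fix y :: "int \<Rightarrow> real" and \<epsilon> :: real
  assume "y \<in> Omega" and "0 < \<epsilon>"
  have "0 \<le> \<eta>" using assms(3) by simp
  have taubar_into: "taubar \<tau> u \<in> Omega" if "u \<in> Omega" for u
    using that assms(5) by (auto simp: Omega_def taubar_def)
  have T_into: "(E \<circ> taubar \<tau>) u \<in> Omega" if "u \<in> Omega" for u
    using taubar_into[OF that] assms(9) by (auto simp: bij_betw_def)
  have E_inv_Lipschitz: "\<forall>u\<in>Omega. \<forall>v\<in>Omega.
      dOm \<theta> (inv_into Omega E u) (inv_into Omega E v) \<le> C\<^sub>E * dOm \<theta> u v"
  proof (intro ballI)
    fix u v assume "u \<in> Omega" "v \<in> Omega"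
    have "shiftn 0 w = w" for w :: "int \<Rightarrow> real" by (simp add: shiftn_def)
    then show "dOm \<theta> (inv_into Omega E u) (inv_into Omega E v) \<le> C\<^sub>E * dOm \<theta> u v"
      using assms(12) \<open>u \<in> Omega\<close> \<open>v \<in> Omega\<close> by metis
  qed
  have branches_cover: "\<forall>t\<in>unitI. {s\<in>unitI. \<tau> s = t} \<subseteq> (\<lambda>j. \<zeta> j t) ` {..<b}"
    using assms(7) by blast
  have local_inv: "\<exists>L. contracting_local_inverse Omega (dOm \<theta>) (\<eta> * C\<^sub>E) (E \<circ> taubar \<tau>) w L"
    if "w \<in> Omega" for w
    using taubar_local_inverse[OF assms(1,2) \<open>0 \<le> \<eta>\<close> assms(5,6) branches_cover assms(8) that]
    by (rule coupled_map_local_inverse[OF _ \<open>0 \<le> \<eta>\<close> assms(9) E_inv_Lipschitz taubar_into[OF that]])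
  have "0 \<le> \<eta> * C\<^sub>E" using assms(3,10) by simp
  moreover have "\<eta> * C\<^sub>E < 1" using assms(3,11) by (simp add: field_simps)
  ultimately show "\<exists>z\<in>(\<Union>n. {w\<in>Omega. ((E \<circ> taubar \<tau>) ^^ n) w = x}). dOm \<theta> z y < \<epsilon>"
    using backward_orbit_dense[OF T_into local_inv _ _ dOm_le_1[OF _ _ assms(1,2)] zero_less_one
        assms(13) \<open>y \<in> Omega\<close> \<open>0 < \<epsilon>\<close>]
    by blast
qed

end
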